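(* Let $\mathcal S$ be a convex Sawtooth model with $n$ upper particles, let $1\le s\le n$ and $t\in[0,1]$. Then $y\mapsto F_{X_s\mid Y_s=y}(t)$ is nonincreasing and $x\mapsto F_{Y_s\mid X_{s+1}=x}(t)$ is nonincreasing. Moreover, for all $y,x$, $$F_{X_s\mid Y_s=y}(t)\ \ge\ F^{\mathcal S_{\to X_s}}_{X_s}(t)\qquad\text{and}\qquad F_{Y_s\mid X_{s+1}=x}(t)\ \le\ F^{\mathcal S_{\to Y_s}}_{Y_s}(t).$$
   Context: A (type $--$) Sawtooth model with $n\ge1$ upper particles is specified by functions $f_1,g_1,\dots,f_n,g_n:[0,1]\to[0,\infty)$, each nondecreasing, $C^1$ and not identically zero. It is the probability space $[0,1]^{n+1}\times[0,1]^n$ with probability density at $(x_1,\dots,x_{n+1},y_1,\dots,y_n)$ equal to $\frac{1}{\mathcal V}\prod_{i=1}^n\mathbf 1_{\{x_i\le y_i\}}\mathbf 1_{\{x_{i+1}\le y_i\}}f_i(y_i-x_i)\,g_i(y_i-x_{i+1})$, $\mathcal V$ being the normalizing constant. The coordinates $X_1,\dots,X_{n+1}$ are the lower particles and $Y_1,\dots,Y_n$ the upper particles (ordered $X_1,Y_1,X_2,\dots,Y_n,X_{n+1}$). The model is convex if every $f_i,g_i$ is positive on $(0,1]$ and log-concave, i.e. $f_i'/f_i$ and $g_i'/g_i$ are nonincreasing. Conditional cumulative distribution functions $F_{U\mid V=v}(t)=\mathbb P(U\le t\mid V=v)$ are computed from the joint density. For a particle $P$, $\mathcal S_{\to P}$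 is the model obtained by keeping only the particles from $X_1$ up to $P$ and the interaction factors among them (if $P=Y_s$ the last factor is $f_s(y_s-x_s)$); $F^{\mathcal S_{\to P}}_U$ is the cumulative distribution function of particle $U$ in $\mathcal S_{\to P}$. *)

theory Defs
  imports "HOL-Analysis.Analysis"
begin

text \<open>Positions of a configuration are stored in p :: nat => real in the order
  X_1, Y_1, X_2, ..., Y_n, X_(n+1): X_i is coordinate 2i-2, Y_i is coordinate 2i-1
  (for i >= 1).\<close>

definition xidx :: "nat \<Rightarrow> nat" where "xidx i = 2 * i - 2"
definition yidx :: "nat \<Rightarrow> nat" where "yidx i = 2 * i - 1"

definition saw_fun :: "(real \<Rightarrow> real) \<Rightarrow> bool" where
  "saw_fun \<phi> \<longleftrightarrow>
     mono_on {0..1} \<phi> \<and> (\<forall>x\<in>{0..1}. 0 \<le> \<phi> x) \<and> (\<exists>x\<in>{0..1}. \<phi> x \<noteq> 0) \<and>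
     (\<forall>x\<in>{0..1}. \<phi> differentiable (at x within {0..1})) \<and>
     continuous_on {0..1} (\<lambda>x. vector_derivative \<phi> (at x within {0..1}))"

text \<open>Convexity condition: positive on (0,1] and log-concave (phi'/phi nonincreasing).\<close>
definition convex_fun :: "(real \<Rightarrow> real) \<Rightarrow> bool" where
  "convex_fun \<phi> \<longleftrightarrow>
     (\<forall>x\<in>{0<..1}. 0 < \<phi> x) \<and>
     (\<forall>x\<in>{0<..1}. \<forall>y\<in>{0<..1}. x \<le> y \<longrightarrow>
        vector_derivative \<phi> (at y within {0..1}) / \<phi> y
          \<le> vector_derivative \<phi> (at x within {0..1}) / \<phi> x)"

definition saw_factor :: "(nat \<Rightarrow> real \<Rightarrow> real) \<Rightarrow> (nat \<Rightarrow> real \<Rightarrow> real) \<Rightarrow> nat \<Rightarrow> (nat \<Rightarrow> real) \<Rightarrow> real" where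
  "saw_factor f g i p =
     (if p (xidx i) \<le> p (yidx i) \<and> p (xidx (Suc i)) \<le> p (yidx i)
      then f i (p (yidx i) - p (xidx i)) * g i (p (yidx i) - p (xidx (Suc i))) else 0)"

definition saw_weight :: "nat \<Rightarrow> (nat \<Rightarrow> real \<Rightarrow> real) \<Rightarrow> (nat \<Rightarrow> real \<Rightarrow> real) \<Rightarrow> (nat \<Rightarrow> real) \<Rightarrow> real" where
  "saw_weight n f g p = (\<Prod>i\<in>{1..n}. saw_factor f g i p)"

text \<open>Unnormalised density of S_{->X_s} (coordinates 0..2s-2).\<close>
definition trunc_weight_X :: "nat \<Rightarrow> (nat \<Rightarrow> real \<Rightarrow> real) \<Rightarrow> (nat \<Rightarrow> real \<Rightarrow> real) \<Rightarrow> (nat \<Rightarrow> real) \<Rightarrow> real" where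
  "trunc_weight_X s f g p = (\<Prod>i\<in>{1..<s}. saw_factor f g i p)"

text \<open>Unnormalised density of S_{->Y_s} (coordinates 0..2s-1); last factor f_s(y_s-x_s).\<close>
definition trunc_weight_Y :: "nat \<Rightarrow> (nat \<Rightarrow> real \<Rightarrow> real) \<Rightarrow> (nat \<Rightarrow> real \<Rightarrow> real) \<Rightarrow> (nat \<Rightarrow> real) \<Rightarrow> real" where
  "trunc_weight_Y s f g p = (\<Prod>i\<in>{1..<s}. saw_factor f g i p) *
     (if p (xidx s) \<le> p (yidx s) then f s (p (yidx s) - p (xidx s)) else 0)"

definition cube :: "nat set \<Rightarrow> (nat \<Rightarrow> real) measure" where
  "cube I = PiM I (\<lambda>_. restrict_space lborel {0..1::real})"

definition model_cdf :: "nat \<Rightarrow> ((nat \<Rightarrow> real) \<Rightarrow> real) \<Rightarrow> nat \<Rightarrow> real \<Rightarrow> real" where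
  "model_cdf N w k t =
     (\<integral>p. (if p k \<le> t then w p else 0) \<partial>cube {..N}) / (\<integral>p. w p \<partial>cube {..N})"

definition marg_dens :: "nat \<Rightarrow> ((nat \<Rightarrow> real) \<Rightarrow> real) \<Rightarrow> nat \<Rightarrow> real \<Rightarrow> real" where
  "marg_dens N w v b = (\<integral>q. w (q(v := b)) \<partial>cube ({..N} - {v}))"

definition cond_cdf :: "nat \<Rightarrow> ((nat \<Rightarrow> real) \<Rightarrow> real) \<Rightarrow> nat \<Rightarrow> nat \<Rightarrow> real \<Rightarrow> real \<Rightarrow> real" where
  "cond_cdf N w u v t b =
     (\<integral>q. (if q u \<le> t then w (q(v := b)) else 0) \<partial>cube ({..N} - {v})) / marg_dens N w v b"

end

theory Submission
  imports Defs "HOL-Probability.Probability"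
begin

text \<open>Fixing \<open>Y\<^sub>s = y\<close> (resp. \<open>X\<^sub>s\<^sub>+\<^sub>1 = x\<close>) cuts the sawtooth chain into two
  conditionally independent pieces, so the conditional law of \<open>X\<^sub>s\<close> (resp. \<open>Y\<^sub>s\<close>) is
  that of the truncated model \<open>S\<^sub>\<rightarrow>\<^sub>X\<^sub>s\<close> (resp. \<open>S\<^sub>\<rightarrow>\<^sub>Y\<^sub>s\<close>) reweighted by
  the single kernel \<open>f\<^sub>s(y - X\<^sub>s)\<close> (resp. \<open>g\<^sub>s(Y\<^sub>s - x)\<close>).
  For log-concave \<open>\<phi>\<close> the kernel \<open>(x, y) \<mapsto> 1\<^sub>x\<^sub>\<le>\<^sub>y \<phi>(y - x)\<close> is totally positive of
  order two, and reweighting by such a kernel moves the distribution monotonically in the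
  parameter (a Chebyshev-type integral inequality). Comparing instead with the constant kernel,
  monotonicity of \<open>\<phi>\<close> alone gives the bounds by the truncated models.\<close>

lemma prob_space_unit_interval: "prob_space (restrict_space lborel {0..1::real})"
  by (rule prob_space_restrict_space) auto

lemma prob_space_cube: "prob_space (cube I)"
  unfolding cube_def by (rule prob_space_PiM) (rule prob_space_unit_interval)

lemma space_cube: "space (cube I) = PiE I (\<lambda>_. {0..1})"
  unfolding cube_def by (simp add: space_PiM space_restrict_space)

lemma integral_cube_union:
  fixes a b :: "(nat \<Rightarrow> real) \<Rightarrow> real"
  assumes IJ: "I \<inter> J = {}" "finite I" "finite J"
    and int: "integrable (cube (I \<union> J)) (\<lambda>p. a p * b p)"
    and a: "\<And>p p'. (\<And>i. i \<in> I \<Longrightarrow> p i = p' i) \<Longrightarrow> a p = a p'"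
    and b: "\<And>p p'. (\<And>i. i \<in> J \<Longrightarrow> p i = p' i) \<Longrightarrow> b p = b p'"
  shows "(\<integral>p. a p * b p \<partial>cube (I \<union> J)) = (\<integral>p. a p \<partial>cube I) * (\<integral>p. b p \<partial>cube J)"
proof -
  interpret product_sigma_finite "\<lambda>_. restrict_space lborel {0..1::real}"
    unfolding product_sigma_finite_def
    using prob_space_unit_interval prob_space_imp_sigma_finite by blast
  have "(\<integral>p. a p * b p \<partial>cube (I \<union> J)) =
     (\<integral>x. (\<integral>y. a (merge I J (x, y)) * b (merge I J (x, y)) \<partial>cube J) \<partial>cube I)"
    unfolding cube_def using product_integral_fold[OF IJ int[unfolded cube_def]] by simp
  also have "\<dots> = (\<integral>x. (\<integral>y. a x * b y \<partial>cube J) \<partial>cube I)"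
  proof -
    have "a (merge I J (x, y)) = a x" for x y by (rule a) (auto simp: merge_def)
    moreover have "b (merge I J (x, y)) = b y" for x y using IJ(1) by (intro b) (auto simp: merge_def)
    ultimately show ?thesis by simp
  qed
  also have "\<dots> = (\<integral>p. a p \<partial>cube I) * (\<integral>p. b p \<partial>cube J)" by simp
  finally show ?thesis .
qed

definition unit_valued :: "nat set \<Rightarrow> ((nat \<Rightarrow> real) \<Rightarrow> real) \<Rightarrow> bool" where
  "unit_valued I e \<longleftrightarrow> e \<in> borel_measurable (cube I) \<and> (\<forall>p\<in>space (cube I). e p \<in> {0..1})"

lemma unit_valued_const: "c \<in> {0..1} \<Longrightarrow> unit_valued I (\<lambda>_. c)"
  unfolding unit_valued_def by simp

lemma unit_valued_coordinate: "j \<in> I \<Longrightarrow> unit_valued I (\<lambda>p. p j)"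
proof -
  assume j: "j \<in> I"
  have "(\<lambda>p. p j) \<in> borel_measurable (cube I)"
    unfolding cube_def using j
    by (auto intro!: measurable_compose[OF measurable_component_singleton] measurable_restrict_space1)
  with j show ?thesis unfolding unit_valued_def by (auto simp: space_cube)
qed

lemma unit_valued_coordinate_upd:
  "j \<in> I \<union> {v} \<Longrightarrow> c \<in> {0..1} \<Longrightarrow> unit_valued I (\<lambda>p. (p(v := c)) j)"
  by (cases "j = v") (auto intro: unit_valued_const unit_valued_coordinate)

definition cube_weight :: "nat set \<Rightarrow> ((nat \<Rightarrow> real) \<Rightarrow> real) \<Rightarrow> bool" where
  "cube_weight I h \<longleftrightarrow>
     h \<in> borel_measurable (cube I) \<and> (\<exists>B. \<forall>p\<in>space (cube I). 0 \<le> h p \<and> h p \<le> B)"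

lemma cube_weight_const: "0 \<le> c \<Longrightarrow> cube_weight I (\<lambda>_. c)"
  unfolding cube_weight_def by auto

lemma cube_weight_mult:
  assumes "cube_weight I h1" "cube_weight I h2"
  shows "cube_weight I (\<lambda>p. h1 p * h2 p)"
proof -
  obtain B1 B2 where m: "h1 \<in> borel_measurable (cube I)" "h2 \<in> borel_measurable (cube I)"
    and b: "\<forall>p\<in>space (cube I). 0 \<le> h1 p \<and> h1 p \<le> B1" "\<forall>p\<in>space (cube I). 0 \<le> h2 p \<and> h2 p \<le> B2"
    using assms unfolding cube_weight_def by blast
  then have "\<forall>p\<in>space (cube I). 0 \<le> h1 p * h2 p \<and> h1 p * h2 p \<le> B1 * B2"
    by (auto intro: mult_mono order.trans)
  with m show ?thesis unfolding cube_weight_def by auto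
qed

lemma cube_weight_prod:
  "finite S \<Longrightarrow> (\<And>i. i \<in> S \<Longrightarrow> cube_weight I (h i)) \<Longrightarrow> cube_weight I (\<lambda>p. \<Prod>i\<in>S. h i p)"
  by (induction S rule: finite_induct) (auto intro: cube_weight_const cube_weight_mult)

lemma cube_weight_if:
  assumes h: "cube_weight I h" and P: "{p \<in> space (cube I). P p} \<in> sets (cube I)"
  shows "cube_weight I (\<lambda>p. if P p then h p else 0)"
proof -
  obtain B where m: "h \<in> borel_measurable (cube I)" and b: "\<forall>p\<in>space (cube I). 0 \<le> h p \<and> h p \<le> B"
    using h unfolding cube_weight_def by blast
  have "(\<lambda>p. if P p then h p else 0) \<in> borel_measurable (cube I)"
    by (rule measurable_If[OF m _ P]) simp
  with b show ?thesis unfolding cube_weight_def by (intro conjI exI[of _ B]) auto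
qed

lemma cube_weight_if_coordinate_le:
  "cube_weight I h \<Longrightarrow> j \<in> I \<Longrightarrow> cube_weight I (\<lambda>p. if p j \<le> t then h p else 0)"
  using unit_valued_coordinate[of j I] unfolding unit_valued_def
  by (intro cube_weight_if) (auto simp del: atLeastAtMost_iff)

lemma cube_weight_cong:
  "cube_weight I h \<Longrightarrow> (\<And>p. p \<in> space (cube I) \<Longrightarrow> h p = h' p) \<Longrightarrow> cube_weight I h'"
  unfolding cube_weight_def by (metis (no_types, lifting) measurable_cong)

lemma cube_weight_integrable: "cube_weight I h \<Longrightarrow> integrable (cube I) h"
proof -
  assume "cube_weight I h"
  then obtain B where "h \<in> borel_measurable (cube I)" "\<forall>p\<in>space (cube I). 0 \<le> h p \<and> h p \<le> B"
    unfolding cube_weight_def by blast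
  moreover interpret prob_space "cube I" by (rule prob_space_cube)
  show ?thesis by (rule integrable_const_bound[where B=B]) (use calculation in auto)
qed

lemma cube_weight_integral_nonneg: "cube_weight I h \<Longrightarrow> 0 \<le> (\<integral>p. h p \<partial>cube I)"
  unfolding cube_weight_def by (auto intro!: integral_nonneg)

section \<open>Reweighting by a totally positive kernel\<close>

text \<open>After splitting both total integrals at \<open>P\<close>, the claim reduces to integrating the
  exchange inequality over \<open>P \<times> \<not> P\<close>.\<close>

lemma integral_exchange_le:
  fixes w k1 k2 :: "'a \<Rightarrow> real"
  assumes "finite_measure M"
    and measurable[measurable]: "w \<in> borel_measurable M" "k1 \<in> borel_measurable M" "k2 \<in> borel_measurable M"
      "{p \<in> space M. P p} \<in> sets M"
    and w: "\<And>p. p \<in> space M \<Longrightarrow> 0 \<le> w p \<and> w p \<le> B"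
    and k1: "\<And>p. p \<in> space M \<Longrightarrow> 0 \<le> k1 p \<and> k1 p \<le> B"
    and k2: "\<And>p. p \<in> space M \<Longrightarrow> 0 \<le> k2 p \<and> k2 p \<le> B"
    and exchange: "\<And>p p'. p \<in> space M \<Longrightarrow> p' \<in> space M \<Longrightarrow> P p \<Longrightarrow> \<not> P p' \<Longrightarrow>
      k2 p * k1 p' \<le> k1 p * k2 p'"
  shows "(\<integral>p. (if P p then w p * k2 p else 0) \<partial>M) * (\<integral>p. w p * k1 p \<partial>M)
       \<le> (\<integral>p. (if P p then w p * k1 p else 0) \<partial>M) * (\<integral>p. w p * k2 p \<partial>M)"
proof -
  interpret finite_measure M by fact
  have [measurable]: "Measurable.pred M P"
    using \<open>{p \<in> space M. P p} \<in> sets M\<close> by (simp add: pred_def)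
  have B0: "0 \<le> B" if "p \<in> space M" for p
    using w[OF that] by linarith
  have integrable_cut:
    "integrable M (\<lambda>p. if P p then w p * k p * c else 0)"
    "integrable M (\<lambda>p. if P p then 0 else w p * k p * c)"
    if [measurable]: "k \<in> borel_measurable M" and k: "\<And>p. p \<in> space M \<Longrightarrow> 0 \<le> k p \<and> k p \<le> B"
    for k c
  proof -
    have bound: "\<bar>w p * k p * c\<bar> \<le> B * B * \<bar>c\<bar>" if "p \<in> space M" for p
      using w[OF that] k[OF that] by (auto simp: abs_mult intro!: mult_mono)
    show "integrable M (\<lambda>p. if P p then w p * k p * c else 0)"
      by (rule integrable_const_bound[where B="B * B * \<bar>c\<bar>"]) (use bound B0 in auto)
    show "integrable M (\<lambda>p. if P p then 0 else w p * k p * c)"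
      by (rule integrable_const_bound[where B="B * B * \<bar>c\<bar>"]) (use bound B0 in auto)
  qed
  note integrable1 = integrable_cut[OF measurable(2) k1] and integrable2 = integrable_cut[OF measurable(3) k2]
  define N where "N k = (\<integral>p. (if P p then w p * k p else 0) \<partial>M)" for k
  define C where "C k = (\<integral>p. (if P p then 0 else w p * k p) \<partial>M)" for k
  have total: "(\<integral>p. w p * k p \<partial>M) = N k + C k"
    if "integrable M (\<lambda>p. if P p then w p * k p else 0)"
       "integrable M (\<lambda>p. if P p then 0 else w p * k p)" for k
  proof -
    have "(\<integral>p. w p * k p \<partial>M) =
        (\<integral>p. (if P p then w p * k p else 0) + (if P p then 0 else w p * k p) \<partial>M)"
      by (rule Bochner_Integration.integral_cong) auto
    also have "\<dots> = N k + C k" unfolding N_def C_def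
      using that by (intro Bochner_Integration.integral_add) auto
    finally show ?thesis .
  qed
  have pointwise: "k2 p * C k1 \<le> k1 p * C k2" if p: "p \<in> space M" "P p" for p
  proof -
    have "k2 p * C k1 = (\<integral>p'. (if P p' then 0 else w p' * k1 p' * k2 p) \<partial>M)"
      unfolding C_def integral_mult_right_zero[symmetric]
      by (rule Bochner_Integration.integral_cong) auto
    also have "\<dots> \<le> (\<integral>p'. (if P p' then 0 else w p' * k2 p' * k1 p) \<partial>M)"
    proof (intro integral_mono integrable1 integrable2)
      fix p' assume p': "p' \<in> space M"
      show "(if P p' then 0 else w p' * k1 p' * k2 p) \<le> (if P p' then 0 else w p' * k2 p' * k1 p)"
        using mult_left_mono[OF exchange[OF p(1) p' p(2)], of "w p'"] w[OF p']
        by (auto simp: ac_simps)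
    qed
    also have "\<dots> = k1 p * C k2"
      unfolding C_def integral_mult_right_zero[symmetric]
      by (rule Bochner_Integration.integral_cong) auto
    finally show ?thesis .
  qed
  have "N k2 * C k1 = (\<integral>p. (if P p then w p * k2 p * C k1 else 0) \<partial>M)"
    unfolding N_def integral_mult_left_zero[symmetric] by (rule Bochner_Integration.integral_cong) auto
  also have "\<dots> \<le> (\<integral>p. (if P p then w p * k1 p * C k2 else 0) \<partial>M)"
  proof (intro integral_mono integrable1 integrable2)
    fix p assume p: "p \<in> space M"
    show "(if P p then w p * k2 p * C k1 else 0) \<le> (if P p then w p * k1 p * C k2 else 0)"
      using mult_left_mono[OF pointwise[OF p], of "w p"] w[OF p] by (auto simp: ac_simps)
  qed
  also have "\<dots> = N k1 * C k2"
    unfolding N_def integral_mult_left_zero[symmetric] by (rule Bochner_Integration.integral_cong) auto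
  finally have "N k2 * C k1 \<le> N k1 * C k2" .
  moreover have "(\<integral>p. w p * k1 p \<partial>M) = N k1 + C k1" "(\<integral>p. w p * k2 p \<partial>M) = N k2 + C k2"
    using total integrable1[where c=1, unfolded mult_1_right] integrable2[where c=1, unfolded mult_1_right]
    by blast+
  ultimately show ?thesis
    unfolding N_def[symmetric] by (simp add: algebra_simps)
qed

lemma model_cdf_reweight_le:
  assumes T: "cube_weight {..m} T" and k1: "cube_weight {..m} k1" and k2: "cube_weight {..m} k2"
    and u: "u \<le> m"
    and exchange: "\<And>p p'. p \<in> space (cube {..m}) \<Longrightarrow> p' \<in> space (cube {..m}) \<Longrightarrow>
      p u \<le> t \<Longrightarrow> t < p' u \<Longrightarrow> k2 p * k1 p' \<le> k1 p * k2 p'"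
    and pos: "0 < (\<integral>p. T p * k1 p \<partial>cube {..m})" "0 < (\<integral>p. T p * k2 p \<partial>cube {..m})"
  shows "model_cdf m (\<lambda>p. T p * k2 p) u t \<le> model_cdf m (\<lambda>p. T p * k1 p) u t"
proof -
  obtain B1 B2 B3 where measurable: "T \<in> borel_measurable (cube {..m})"
      "k1 \<in> borel_measurable (cube {..m})" "k2 \<in> borel_measurable (cube {..m})"
    and bounds: "\<forall>p\<in>space (cube {..m}). 0 \<le> T p \<and> T p \<le> B1"
      "\<forall>p\<in>space (cube {..m}). 0 \<le> k1 p \<and> k1 p \<le> B2"
      "\<forall>p\<in>space (cube {..m}). 0 \<le> k2 p \<and> k2 p \<le> B3"
    using T k1 k2 unfolding cube_weight_def by metis
  interpret prob_space "cube {..m}" by (rule prob_space_cube)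
  have [measurable]: "(\<lambda>p. p u) \<in> borel_measurable (cube {..m})"
    using unit_valued_coordinate[of u "{..m}"] u by (simp add: unit_valued_def)
  have "{p \<in> space (cube {..m}). p u \<le> t} \<in> sets (cube {..m})" by measurable
  then have "(\<integral>p. (if p u \<le> t then T p * k2 p else 0) \<partial>cube {..m}) * (\<integral>p. T p * k1 p \<partial>cube {..m})
      \<le> (\<integral>p. (if p u \<le> t then T p * k1 p else 0) \<partial>cube {..m}) * (\<integral>p. T p * k2 p \<partial>cube {..m})"
    using measurable bounds exchange finite_measure_axioms
    by (intro integral_exchange_le[where B="\<bar>B1\<bar> + \<bar>B2\<bar> + \<bar>B3\<bar>"]) auto
  with pos show ?thesis
    unfolding model_cdf_def by (simp add: divide_simps mult.commute)
qed

lemma cube_weight_integral_pos_of_mult: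
  assumes T: "cube_weight I T" and k: "cube_weight I k" and pos: "0 < (\<integral>p. T p * k p \<partial>cube I)"
  shows "0 < (\<integral>p. T p \<partial>cube I)"
proof -
  obtain B where bound: "\<forall>p\<in>space (cube I). 0 \<le> k p \<and> k p \<le> B"
    using k unfolding cube_weight_def by blast
  have T_nonneg: "\<forall>p\<in>space (cube I). 0 \<le> T p"
    using T unfolding cube_weight_def by blast
  have "(\<integral>p. T p * k p \<partial>cube I) \<le> (\<integral>p. T p * max B 0 \<partial>cube I)"
    using bound T_nonneg
    by (intro integral_mono cube_weight_integrable cube_weight_mult T k cube_weight_const)
      (auto intro: mult_left_mono order.trans[OF _ max.cobounded1])
  also have "\<dots> = (\<integral>p. T p \<partial>cube I) * max B 0" by simp
  finally show ?thesis
    using pos cube_weight_integral_nonneg[OF T] by (cases "(\<integral>p. T p \<partial>cube I) = 0") auto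
qed

section \<open>Log-concave interaction functions\<close>

lemma saw_fun_nonneg: "saw_fun \<phi> \<Longrightarrow> 0 \<le> x \<Longrightarrow> x \<le> 1 \<Longrightarrow> 0 \<le> \<phi> x"
  unfolding saw_fun_def by auto

lemma saw_fun_mono: "saw_fun \<phi> \<Longrightarrow> 0 \<le> x \<Longrightarrow> x \<le> y \<Longrightarrow> y \<le> 1 \<Longrightarrow> \<phi> x \<le> \<phi> y"
  unfolding saw_fun_def mono_on_def by auto

lemma saw_fun_continuous_on: "saw_fun \<phi> \<Longrightarrow> continuous_on {0..1} \<phi>"
  unfolding saw_fun_def continuous_on_eq_continuous_within
  using differentiable_imp_continuous_within by blast

lemma saw_fun_DERIV:
  assumes "saw_fun \<phi>" "0 < z" "z < 1"
  shows "DERIV \<phi> z :> vector_derivative \<phi> (at z within {0..1})"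
proof -
  have "\<phi> differentiable (at z within {0..1})" using assms unfolding saw_fun_def by auto
  then have "(\<phi> has_vector_derivative vector_derivative \<phi> (at z within {0..1})) (at z within {0..1})"
    by (simp add: vector_derivative_works)
  moreover have "at z within {0..1} = at z" using assms by (intro at_within_interior) auto
  ultimately show ?thesis by (simp add: has_real_derivative_iff_has_vector_derivative)
qed

text \<open>Mean value theorem for \<open>ln \<circ> \<phi>\<close> on \<open>[a, b]\<close> and on \<open>[d, c]\<close>: the two
  intervals have the same length and the second lies to the right, where \<open>\<phi>'/\<phi>\<close> is smaller.\<close>

lemma convex_fun_exchange:
  fixes \<phi> :: "real \<Rightarrow> real"
  assumes saw: "saw_fun \<phi>" and cvx: "convex_fun \<phi>"
    and abdc: "0 \<le> a" "a \<le> b" "b \<le> d" "b + d = a + c" "c \<le> 1"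
  shows "\<phi> a * \<phi> c \<le> \<phi> b * \<phi> d"
proof (cases "\<phi> a = 0 \<or> a = b")
  case True
  then show ?thesis
    using abdc saw_fun_nonneg[OF saw] by (auto simp: mult.commute)
next
  case False
  then have "0 < \<phi> a" "a < b" "d < c"
    using abdc saw_fun_nonneg[OF saw, of a] by auto
  then have pos: "0 < \<phi> x" if "a \<le> x" "x \<le> 1" for x
    using saw_fun_mono[OF saw, of a x] that abdc by auto
  define h where "h x = ln (\<phi> x)" for x
  define D where "D x = vector_derivative \<phi> (at x within {0..1})" for x
  have h_DERIV: "DERIV h z :> D z / \<phi> z" if "a < z" "z < 1" for z
    unfolding h_def D_def using that abdc
    by (auto intro!: derivative_eq_intros saw_fun_DERIV[OF saw] pos)
  have h_continuous: "continuous_on {x..y} h" if "a \<le> x" "y \<le> 1" for x y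
  proof -
    have "continuous_on {x..y} \<phi>"
      using that abdc by (intro continuous_on_subset[OF saw_fun_continuous_on[OF saw]]) auto
    moreover have "\<forall>z\<in>{x..y}. \<phi> z \<noteq> 0"
    proof
      fix z assume "z \<in> {x..y}"
      then have "a \<le> z" "z \<le> 1" using that by auto
      from pos[OF this] show "\<phi> z \<noteq> 0" by simp
    qed
    ultimately show ?thesis unfolding h_def by (rule continuous_on_ln)
  qed
  have h_differentiable: "h differentiable (at z)" if "a < z" "z < 1" for z
    using h_DERIV[OF that] real_differentiable_def by blast
  have "continuous_on {a..b} h" "\<And>z. a < z \<Longrightarrow> z < b \<Longrightarrow> h differentiable (at z)"
    using h_continuous h_differentiable abdc by auto
  from MVT[OF \<open>a < b\<close> this] obtain l1 z1
    where z1: "a < z1" "z1 < b" "DERIV h z1 :> l1" "h b - h a = (b - a) * l1" by blast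
  have "continuous_on {d..c} h" "\<And>z. d < z \<Longrightarrow> z < c \<Longrightarrow> h differentiable (at z)"
    using h_continuous h_differentiable abdc by auto
  from MVT[OF \<open>d < c\<close> this] obtain l2 z2
    where z2: "d < z2" "z2 < c" "DERIV h z2 :> l2" "h c - h d = (c - d) * l2" by blast
  have "l1 = D z1 / \<phi> z1" "l2 = D z2 / \<phi> z2"
    using DERIV_unique[OF z1(3) h_DERIV] DERIV_unique[OF z2(3) h_DERIV] z1 z2 abdc by auto
  note z1 = z1[unfolded this(1)] and z2 = z2[unfolded this(2)]
  have "D z2 / \<phi> z2 \<le> D z1 / \<phi> z1"
    using cvx z1 z2 abdc unfolding convex_fun_def D_def by auto
  moreover have "c - d = b - a" "0 \<le> b - a" using abdc by auto
  ultimately have "(c - d) * (D z2 / \<phi> z2) \<le> (b - a) * (D z1 / \<phi> z1)"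
    by (metis mult_left_mono)
  then have "h c - h d \<le> h b - h a"
    unfolding z1(4) z2(4) .
  then have "exp (h a + h c) \<le> exp (h b + h d)" by simp
  then show ?thesis
    unfolding h_def exp_add using pos abdc by simp
qed

definition shift_kernel :: "(real \<Rightarrow> real) \<Rightarrow> real \<Rightarrow> real \<Rightarrow> real" where
  "shift_kernel \<phi> x y = (if x \<le> y then \<phi> (y - x) else 0)"

lemma shift_kernel_bounds:
  "saw_fun \<phi> \<Longrightarrow> x \<in> {0..1} \<Longrightarrow> y \<in> {0..1} \<Longrightarrow> 0 \<le> shift_kernel \<phi> x y \<and> shift_kernel \<phi> x y \<le> \<phi> 1"
  unfolding shift_kernel_def by (auto intro: saw_fun_nonneg saw_fun_mono)

lemma shift_kernel_antimono:
  "saw_fun \<phi> \<Longrightarrow> x \<le> x' \<Longrightarrow> x \<in> {0..1} \<Longrightarrow> x' \<in> {0..1} \<Longrightarrow> y \<in> {0..1} \<Longrightarrow>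
    shift_kernel \<phi> x' y \<le> shift_kernel \<phi> x y"
  unfolding shift_kernel_def by (auto intro: saw_fun_nonneg saw_fun_mono)

lemma shift_kernel_mono:
  "saw_fun \<phi> \<Longrightarrow> y \<le> y' \<Longrightarrow> x \<in> {0..1} \<Longrightarrow> y \<in> {0..1} \<Longrightarrow> y' \<in> {0..1} \<Longrightarrow>
    shift_kernel \<phi> x y \<le> shift_kernel \<phi> x y'"
  unfolding shift_kernel_def by (auto intro: saw_fun_nonneg saw_fun_mono)

lemma shift_kernel_TP2:
  assumes saw: "saw_fun \<phi>" and cvx: "convex_fun \<phi>"
    and xy: "x \<le> x'" "y \<le> y'" "x \<in> {0..1}" "x' \<in> {0..1}" "y \<in> {0..1}" "y' \<in> {0..1}"
  shows "shift_kernel \<phi> x y' * shift_kernel \<phi> x' y \<le> shift_kernel \<phi> x y * shift_kernel \<phi> x' y'"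
proof (cases "x' \<le> y")
  case x'y: True
  have "\<phi> (y - x') * \<phi> (y' - x) \<le> \<phi> (y - x) * \<phi> (y' - x')"
  proof (cases "y - x \<le> y' - x'")
    case True
    then show ?thesis using x'y xy by (intro convex_fun_exchange[OF saw cvx]) auto
  next
    case False
    then have "\<phi> (y - x') * \<phi> (y' - x) \<le> \<phi> (y' - x') * \<phi> (y - x)"
      using x'y xy by (intro convex_fun_exchange[OF saw cvx]) auto
    then show ?thesis by (simp add: mult.commute)
  qed
  then show ?thesis
    using x'y xy unfolding shift_kernel_def by (auto simp: mult.commute)
next
  case False
  then show ?thesis
    using shift_kernel_bounds[OF saw] xy unfolding shift_kernel_def by (auto intro: mult_nonneg_nonneg)
qed

lemma cube_weight_shift_kernel:
  assumes saw: "saw_fun \<phi>" and a: "unit_valued I a" and b: "unit_valued I b"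
  shows "cube_weight I (\<lambda>p. shift_kernel \<phi> (a p) (b p))"
proof -
  have [measurable]: "a \<in> borel_measurable (cube I)" "b \<in> borel_measurable (cube I)"
    using a b unfolding unit_valued_def by auto
  \<comment> \<open>\<open>\<phi>\<close> is only continuous on \<open>[0,1]\<close>; clamping gives a Borel function on all of \<open>\<real>\<close>
     that agrees with \<open>\<phi>\<close> wherever the kernel is evaluated.\<close>
  define \<phi>' where "\<phi>' z = \<phi> (max 0 (min 1 z))" for z
  have "continuous_on UNIV \<phi>'"
    unfolding \<phi>'_def
    by (rule continuous_on_compose2[OF saw_fun_continuous_on[OF saw]]) (auto intro!: continuous_intros)
  then have [measurable]: "\<phi>' \<in> borel_measurable borel"
    by (rule borel_measurable_continuous_onI)
  have bounds: "0 \<le> \<phi>' z \<and> \<phi>' z \<le> \<phi> 1" for z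
    unfolding \<phi>'_def
    using saw_fun_nonneg[OF saw, of "max 0 (min 1 z)"] saw_fun_mono[OF saw, of "max 0 (min 1 z)" 1]
    by auto
  have "cube_weight I (\<lambda>p. shift_kernel \<phi>' (a p) (b p))"
    unfolding cube_weight_def shift_kernel_def
  proof (intro conjI exI[of _ "\<phi> 1"] ballI)
    show "(\<lambda>p. if a p \<le> b p then \<phi>' (b p - a p) else 0) \<in> borel_measurable (cube I)"
      by measurable
  qed (use bounds saw_fun_nonneg[OF saw, of 1] in auto)
  then show ?thesis
  proof (rule cube_weight_cong)
    fix p assume "p \<in> space (cube I)"
    then have "a p \<in> {0..1}" "b p \<in> {0..1}" using a b unfolding unit_valued_def by auto
    then show "shift_kernel \<phi>' (a p) (b p) = shift_kernel \<phi> (a p) (b p)"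
      by (auto simp: shift_kernel_def \<phi>'_def)
  qed
qed

lemma yidx_eq_Suc_xidx: "1 \<le> s \<Longrightarrow> yidx s = Suc (xidx s)"
  by (simp add: xidx_def yidx_def)

lemma xidx_Suc_eq_Suc_yidx: "1 \<le> s \<Longrightarrow> xidx (Suc s) = Suc (yidx s)"
  by (simp add: xidx_def yidx_def)

lemma saw_factor_eq_shift_kernel:
  "saw_factor f g i p =
     shift_kernel (f i) (p (xidx i)) (p (yidx i)) * shift_kernel (g i) (p (xidx (Suc i))) (p (yidx i))"
  by (simp add: saw_factor_def shift_kernel_def)

lemma trunc_weight_Y_eq:
  "trunc_weight_Y s f g p = trunc_weight_X s f g p * shift_kernel (f s) (p (xidx s)) (p (yidx s))"
  by (simp add: trunc_weight_Y_def trunc_weight_X_def shift_kernel_def)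

definition tail_weight ::
  "nat \<Rightarrow> nat \<Rightarrow> (nat \<Rightarrow> real \<Rightarrow> real) \<Rightarrow> (nat \<Rightarrow> real \<Rightarrow> real) \<Rightarrow> (nat \<Rightarrow> real) \<Rightarrow> real" where
  "tail_weight n s f g p = (\<Prod>i\<in>{Suc s..n}. saw_factor f g i p)"

lemma saw_weight_split:
  assumes "1 \<le> s" "s \<le> n"
  shows "saw_weight n f g p = trunc_weight_X s f g p * saw_factor f g s p * tail_weight n s f g p"
proof -
  have indices: "{1..n} = {1..<s} \<union> insert s {Suc s..n}" using assms by auto
  have "saw_weight n f g p =
      (\<Prod>i\<in>{1..<s}. saw_factor f g i p) * (\<Prod>i\<in>insert s {Suc s..n}. saw_factor f g i p)"
    unfolding saw_weight_def indices by (subst prod.union_disjoint) auto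
  then show ?thesis
    unfolding trunc_weight_X_def tail_weight_def by (simp add: mult.assoc)
qed

lemma saw_factor_cong:
  "p (xidx i) = p' (xidx i) \<Longrightarrow> p (yidx i) = p' (yidx i) \<Longrightarrow> p (xidx (Suc i)) = p' (xidx (Suc i)) \<Longrightarrow>
    saw_factor f g i p = saw_factor f g i p'"
  by (simp add: saw_factor_def)

lemma trunc_weight_X_cong:
  "(\<And>j. j \<le> xidx s \<Longrightarrow> p j = p' j) \<Longrightarrow> trunc_weight_X s f g p = trunc_weight_X s f g p'"
  unfolding trunc_weight_X_def by (intro prod.cong refl saw_factor_cong) (auto simp: xidx_def yidx_def)

lemma trunc_weight_Y_cong:
  "(\<And>j. j \<le> yidx s \<Longrightarrow> p j = p' j) \<Longrightarrow> trunc_weight_Y s f g p = trunc_weight_Y s f g p'"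
  unfolding trunc_weight_Y_eq using trunc_weight_X_cong[of s p p' f g]
  by (simp add: xidx_def yidx_def)

lemma tail_weight_cong:
  "(\<And>j. xidx (Suc s) \<le> j \<Longrightarrow> j \<le> 2 * n \<Longrightarrow> p j = p' j) \<Longrightarrow> tail_weight n s f g p = tail_weight n s f g p'"
  unfolding tail_weight_def by (intro prod.cong refl saw_factor_cong) (auto simp: xidx_def yidx_def)

lemma cube_weight_saw_factor:
  assumes "saw_fun (f i)" "saw_fun (g i)"
    and "\<And>j. j \<in> {xidx i, yidx i, xidx (Suc i)} \<Longrightarrow> unit_valued I (\<lambda>p. E p j)"
  shows "cube_weight I (\<lambda>p. saw_factor f g i (E p))"
  unfolding saw_factor_eq_shift_kernel using assms
  by (intro cube_weight_mult cube_weight_shift_kernel) auto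

lemma cube_weight_trunc_weight_X:
  assumes "\<forall>i\<in>{1..<s}. saw_fun (f i) \<and> saw_fun (g i)" "{..xidx s} \<subseteq> I"
  shows "cube_weight I (trunc_weight_X s f g)"
  unfolding trunc_weight_X_def using assms
  by (intro cube_weight_prod cube_weight_saw_factor[where E="\<lambda>p. p", simplified] unit_valued_coordinate)
    (auto simp: xidx_def yidx_def)

lemma cube_weight_trunc_weight_Y:
  assumes "\<forall>i\<in>{1..<s}. saw_fun (f i) \<and> saw_fun (g i)" "saw_fun (f s)" "{..yidx s} \<subseteq> I"
  shows "cube_weight I (trunc_weight_Y s f g)"
  unfolding trunc_weight_Y_eq using assms
  by (intro cube_weight_mult cube_weight_trunc_weight_X cube_weight_shift_kernel unit_valued_coordinate)
    (auto simp: xidx_def yidx_def)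

lemma cube_weight_tail_weight:
  assumes "\<forall>i\<in>{Suc s..n}. saw_fun (f i) \<and> saw_fun (g i)"
    and "\<And>j. xidx (Suc s) \<le> j \<Longrightarrow> j \<le> 2 * n \<Longrightarrow> unit_valued I (\<lambda>p. E p j)"
  shows "cube_weight I (\<lambda>p. tail_weight n s f g (E p))"
  unfolding tail_weight_def using assms
  by (intro cube_weight_prod cube_weight_saw_factor) (auto simp: xidx_def yidx_def)

section \<open>Conditioning on a single particle\<close>

text \<open>By Fubini the integrals of \<open>\<alpha>\<close> and \<open>\<beta>\<close> separate, and the factor \<open>\<integral> \<beta>\<close> cancels
  from the conditional distribution function.\<close>

lemma cond_cdf_factorization:
  assumes part: "{..N} - {v} = {..m} \<union> R" "{..m} \<inter> R = {}" "finite R" and u: "u \<le> m"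
    and split: "\<And>q. W (q(v := c)) = \<alpha> q * \<beta> q"
    and \<alpha>: "\<And>I. {..m} \<subseteq> I \<Longrightarrow> cube_weight I \<alpha>" and \<beta>: "\<And>I. R \<subseteq> I \<Longrightarrow> cube_weight I \<beta>"
    and \<alpha>_cong: "\<And>q q'. (\<And>j. j \<le> m \<Longrightarrow> q j = q' j) \<Longrightarrow> \<alpha> q = \<alpha> q'"
    and \<beta>_cong: "\<And>q q'. (\<And>j. j \<in> R \<Longrightarrow> q j = q' j) \<Longrightarrow> \<beta> q = \<beta> q'"
    and pos: "0 < marg_dens N W v c"
  shows "0 < (\<integral>q. \<alpha> q \<partial>cube {..m})" "cond_cdf N W u v t c = model_cdf m \<alpha> u t"
proof -
  have factor: "(\<integral>q. h q * \<beta> q \<partial>cube ({..N} - {v})) = (\<integral>q. h q \<partial>cube {..m}) * (\<integral>q. \<beta> q \<partial>cube R)"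
    if h: "cube_weight ({..m} \<union> R) h" and h_cong: "\<And>q q'. (\<And>j. j \<le> m \<Longrightarrow> q j = q' j) \<Longrightarrow> h q = h q'"
    for h
    unfolding part(1)
  proof (rule integral_cube_union[OF part(2) finite_atMost part(3)])
    show "integrable (cube ({..m} \<union> R)) (\<lambda>q. h q * \<beta> q)"
      by (intro cube_weight_integrable cube_weight_mult h \<beta> Un_upper2)
  qed (auto intro: h_cong \<beta>_cong)
  have \<alpha>_le: "cube_weight ({..m} \<union> R) (\<lambda>q. if q u \<le> t then \<alpha> q else 0)"
    using u by (intro cube_weight_if_coordinate_le \<alpha>) auto
  have \<alpha>_le_cong: "(if q u \<le> t then \<alpha> q else 0) = (if q' u \<le> t then \<alpha> q' else 0)"
    if "\<And>j. j \<le> m \<Longrightarrow> q j = q' j" for q q'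
    using that[OF u] \<alpha>_cong[OF that] by simp
  have marg: "marg_dens N W v c = (\<integral>q. \<alpha> q \<partial>cube {..m}) * (\<integral>q. \<beta> q \<partial>cube R)"
    unfolding marg_dens_def split by (rule factor[OF \<alpha>[OF Un_upper1] \<alpha>_cong])
  have "(\<integral>q. (if q u \<le> t then W (q(v := c)) else 0) \<partial>cube ({..N} - {v})) =
      (\<integral>q. (if q u \<le> t then \<alpha> q else 0) * \<beta> q \<partial>cube ({..N} - {v}))"
    unfolding split by (rule Bochner_Integration.integral_cong) auto
  also have "\<dots> = (\<integral>q. (if q u \<le> t then \<alpha> q else 0) \<partial>cube {..m}) * (\<integral>q. \<beta> q \<partial>cube R)"
    by (rule factor[OF \<alpha>_le \<alpha>_le_cong])
  finally have numerator: "(\<integral>q. (if q u \<le> t then W (q(v := c)) else 0) \<partial>cube ({..N} - {v})) =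
      (\<integral>q. (if q u \<le> t then \<alpha> q else 0) \<partial>cube {..m}) * (\<integral>q. \<beta> q \<partial>cube R)" .
  have "0 \<le> (\<integral>q. \<alpha> q \<partial>cube {..m})" "0 \<le> (\<integral>q. \<beta> q \<partial>cube R)"
    by (intro cube_weight_integral_nonneg \<alpha> \<beta> order_refl)+
  then have "0 < (\<integral>q. \<alpha> q \<partial>cube {..m})" "0 < (\<integral>q. \<beta> q \<partial>cube R)"
    using pos unfolding marg by (auto simp: zero_less_mult_iff)
  then show "0 < (\<integral>q. \<alpha> q \<partial>cube {..m})" "cond_cdf N W u v t c = model_cdf m \<alpha> u t"
    unfolding cond_cdf_def model_cdf_def numerator marg by simp_all
qed

lemma saw_weight_upd_yidx:
  assumes "1 \<le> s" "s \<le> n"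
  shows "saw_weight n f g (q(yidx s := y)) =
    (trunc_weight_X s f g q * shift_kernel (f s) (q (xidx s)) y) *
    (shift_kernel (g s) (q (xidx (Suc s))) y * tail_weight n s f g q)"
proof -
  have "trunc_weight_X s f g (q(yidx s := y)) = trunc_weight_X s f g q"
    by (rule trunc_weight_X_cong) (use assms in \<open>auto simp: yidx_eq_Suc_xidx\<close>)
  moreover have "tail_weight n s f g (q(yidx s := y)) = tail_weight n s f g q"
    by (rule tail_weight_cong) (use assms in \<open>auto simp: xidx_Suc_eq_Suc_yidx\<close>)
  ultimately show ?thesis
    using assms unfolding saw_weight_split[OF assms] saw_factor_eq_shift_kernel
    by (simp add: yidx_eq_Suc_xidx xidx_Suc_eq_Suc_yidx ac_simps)
qed

lemma cond_cdf_X_given_Y: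
  assumes saw: "\<forall>i\<in>{1..n}. saw_fun (f i) \<and> saw_fun (g i)" and s: "1 \<le> s" "s \<le> n"
    and y: "y \<in> {0..1}" and pos: "0 < marg_dens (2 * n) (saw_weight n f g) (yidx s) y"
  defines "\<alpha> \<equiv> \<lambda>q. trunc_weight_X s f g q * shift_kernel (f s) (q (xidx s)) y"
  shows "0 < (\<integral>q. \<alpha> q \<partial>cube {..xidx s})"
    "cond_cdf (2 * n) (saw_weight n f g) (xidx s) (yidx s) t y = model_cdf (xidx s) \<alpha> (xidx s) t"
proof -
  define R where "R = {Suc (yidx s)..2 * n}"
  have part: "{..2 * n} - {yidx s} = {..xidx s} \<union> R" "{..xidx s} \<inter> R = {}"
    using s by (auto simp: R_def xidx_def yidx_def)
  have \<alpha>_weight: "cube_weight I \<alpha>" if "{..xidx s} \<subseteq> I" for I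
    unfolding \<alpha>_def using saw s that y
    by (intro cube_weight_mult cube_weight_trunc_weight_X cube_weight_shift_kernel
        unit_valued_coordinate unit_valued_const) auto
  have \<beta>_weight: "cube_weight I (\<lambda>q. shift_kernel (g s) (q (xidx (Suc s))) y * tail_weight n s f g q)"
    if "R \<subseteq> I" for I
    using saw s that y
    by (intro cube_weight_mult cube_weight_tail_weight cube_weight_shift_kernel
        unit_valued_coordinate unit_valued_const) (auto simp: R_def xidx_Suc_eq_Suc_yidx yidx_def)
  have \<alpha>_cong: "\<alpha> q = \<alpha> q'" if "\<And>j. j \<le> xidx s \<Longrightarrow> q j = q' j" for q q'
    unfolding \<alpha>_def using trunc_weight_X_cong[OF that] that[of "xidx s"] by simp
  have \<beta>_cong: "shift_kernel (g s) (q (xidx (Suc s))) y * tail_weight n s f g q =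
      shift_kernel (g s) (q' (xidx (Suc s))) y * tail_weight n s f g q'"
    if "\<And>j. j \<in> R \<Longrightarrow> q j = q' j" for q q'
  proof -
    have "tail_weight n s f g q = tail_weight n s f g q'"
      by (rule tail_weight_cong) (use that s in \<open>auto simp: R_def xidx_Suc_eq_Suc_yidx\<close>)
    moreover have "q (xidx (Suc s)) = q' (xidx (Suc s))"
      using that s by (auto simp: R_def xidx_def yidx_def)
    ultimately show ?thesis by simp
  qed
  have split: "saw_weight n f g (q(yidx s := y)) =
      \<alpha> q * (shift_kernel (g s) (q (xidx (Suc s))) y * tail_weight n s f g q)" for q
    unfolding \<alpha>_def by (rule saw_weight_upd_yidx[OF s])
  show "0 < (\<integral>q. \<alpha> q \<partial>cube {..xidx s})"
    "cond_cdf (2 * n) (saw_weight n f g) (xidx s) (yidx s) t y = model_cdf (xidx s) \<alpha> (xidx s) t"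
    using cond_cdf_factorization[OF part _ order_refl split \<alpha>_weight \<beta>_weight \<alpha>_cong \<beta>_cong pos]
    by (auto simp: R_def)
qed

lemma saw_weight_upd_xidx:
  assumes "1 \<le> s" "s \<le> n"
  shows "saw_weight n f g (q(xidx (Suc s) := x)) =
    (trunc_weight_Y s f g q * shift_kernel (g s) x (q (yidx s))) * tail_weight n s f g (q(xidx (Suc s) := x))"
proof -
  have "trunc_weight_X s f g (q(xidx (Suc s) := x)) = trunc_weight_X s f g q"
    by (rule trunc_weight_X_cong) (use assms in \<open>auto simp: xidx_def\<close>)
  then show ?thesis
    using assms unfolding saw_weight_split[OF assms] saw_factor_eq_shift_kernel trunc_weight_Y_eq
    by (simp add: yidx_eq_Suc_xidx xidx_Suc_eq_Suc_yidx ac_simps)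
qed

lemma cond_cdf_Y_given_X:
  assumes saw: "\<forall>i\<in>{1..n}. saw_fun (f i) \<and> saw_fun (g i)" and s: "1 \<le> s" "s \<le> n"
    and x: "x \<in> {0..1}" and pos: "0 < marg_dens (2 * n) (saw_weight n f g) (xidx (Suc s)) x"
  defines "\<alpha> \<equiv> \<lambda>q. trunc_weight_Y s f g q * shift_kernel (g s) x (q (yidx s))"
  shows "0 < (\<integral>q. \<alpha> q \<partial>cube {..yidx s})"
    "cond_cdf (2 * n) (saw_weight n f g) (yidx s) (xidx (Suc s)) t x = model_cdf (yidx s) \<alpha> (yidx s) t"
proof -
  define v where "v = xidx (Suc s)"
  define R where "R = {Suc v..2 * n}"
  have part: "{..2 * n} - {v} = {..yidx s} \<union> R" "{..yidx s} \<inter> R = {}"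
    using s by (auto simp: R_def v_def xidx_def yidx_def)
  have \<alpha>_weight: "cube_weight I \<alpha>" if "{..yidx s} \<subseteq> I" for I
    unfolding \<alpha>_def using saw s that x
    by (intro cube_weight_mult cube_weight_trunc_weight_Y cube_weight_shift_kernel
        unit_valued_coordinate unit_valued_const) auto
  have \<beta>_weight: "cube_weight I (\<lambda>q. tail_weight n s f g (q(v := x)))" if "R \<subseteq> I" for I
  proof (rule cube_weight_tail_weight)
    show "unit_valued I (\<lambda>q. (q(v := x)) j)" if "xidx (Suc s) \<le> j" "j \<le> 2 * n" for j
    proof (rule unit_valued_coordinate_upd[OF _ x])
      have "j = v \<or> j \<in> R" using that by (auto simp: R_def v_def)
      then show "j \<in> I \<union> {v}" using \<open>R \<subseteq> I\<close> by auto
    qed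
  qed (use saw in auto)
  have \<alpha>_cong: "\<alpha> q = \<alpha> q'" if "\<And>j. j \<le> yidx s \<Longrightarrow> q j = q' j" for q q'
    unfolding \<alpha>_def using trunc_weight_Y_cong[OF that] that[of "yidx s"] by simp
  have \<beta>_cong: "tail_weight n s f g (q(v := x)) = tail_weight n s f g (q'(v := x))"
    if "\<And>j. j \<in> R \<Longrightarrow> q j = q' j" for q q'
    by (rule tail_weight_cong) (use that in \<open>auto simp: R_def v_def\<close>)
  have split: "saw_weight n f g (q(v := x)) = \<alpha> q * tail_weight n s f g (q(v := x))" for q
    unfolding \<alpha>_def v_def by (rule saw_weight_upd_xidx[OF s])
  show "0 < (\<integral>q. \<alpha> q \<partial>cube {..yidx s})"
    "cond_cdf (2 * n) (saw_weight n f g) (yidx s) (xidx (Suc s)) t x = model_cdf (yidx s) \<alpha> (yidx s) t"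
    using cond_cdf_factorization[OF part _ order_refl split \<alpha>_weight \<beta>_weight \<alpha>_cong \<beta>_cong
        pos[folded v_def]]
    by (auto simp: R_def v_def)
qed

lemma cond_cdf_X_given_Y_antimono:
  assumes saw: "\<forall>i\<in>{1..n}. saw_fun (f i) \<and> saw_fun (g i)" and cvx: "convex_fun (f s)"
    and s: "1 \<le> s" "s \<le> n" and y: "y1 \<in> {0..1}" "y2 \<in> {0..1}" "y1 \<le> y2"
    and pos: "0 < marg_dens (2 * n) (saw_weight n f g) (yidx s) y1"
      "0 < marg_dens (2 * n) (saw_weight n f g) (yidx s) y2"
  shows "cond_cdf (2 * n) (saw_weight n f g) (xidx s) (yidx s) t y2
    \<le> cond_cdf (2 * n) (saw_weight n f g) (xidx s) (yidx s) t y1"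
proof -
  let ?k = "\<lambda>y q. shift_kernel (f s) (q (xidx s)) y"
  note cond1 = cond_cdf_X_given_Y[OF saw s y(1) pos(1)]
    and cond2 = cond_cdf_X_given_Y[OF saw s y(2) pos(2)]
  have "model_cdf (xidx s) (\<lambda>q. trunc_weight_X s f g q * ?k y2 q) (xidx s) t
      \<le> model_cdf (xidx s) (\<lambda>q. trunc_weight_X s f g q * ?k y1 q) (xidx s) t"
  proof (rule model_cdf_reweight_le[OF _ _ _ order_refl _ cond1(1) cond2(1)])
    fix p p' assume p: "p \<in> space (cube {..xidx s})" "p' \<in> space (cube {..xidx s})"
      and "p (xidx s) \<le> t" "t < p' (xidx s)"
    moreover have "p (xidx s) \<in> {0..1}" "p' (xidx s) \<in> {0..1}"
      using p by (auto simp: space_cube)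
    ultimately show "?k y2 p * ?k y1 p' \<le> ?k y1 p * ?k y2 p'"
      using saw s y by (intro shift_kernel_TP2 cvx) auto
  qed (use saw s y in \<open>auto intro!: cube_weight_trunc_weight_X cube_weight_shift_kernel
        unit_valued_coordinate unit_valued_const\<close>)
  then show ?thesis unfolding cond1(2) cond2(2) .
qed

lemma trunc_cdf_le_cond_cdf_X_given_Y:
  assumes saw: "\<forall>i\<in>{1..n}. saw_fun (f i) \<and> saw_fun (g i)"
    and s: "1 \<le> s" "s \<le> n" and y: "y \<in> {0..1}"
    and pos: "0 < marg_dens (2 * n) (saw_weight n f g) (yidx s) y"
  shows "model_cdf (xidx s) (trunc_weight_X s f g) (xidx s) t
    \<le> cond_cdf (2 * n) (saw_weight n f g) (xidx s) (yidx s) t y"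
proof -
  let ?k = "\<lambda>q. shift_kernel (f s) (q (xidx s)) y"
  note cond = cond_cdf_X_given_Y[OF saw s y pos]
  have T: "cube_weight {..xidx s} (trunc_weight_X s f g)" and k: "cube_weight {..xidx s} ?k"
    using saw s y by (auto intro!: cube_weight_trunc_weight_X cube_weight_shift_kernel
        unit_valued_coordinate unit_valued_const)
  have "model_cdf (xidx s) (\<lambda>q. trunc_weight_X s f g q * 1) (xidx s) t
      \<le> model_cdf (xidx s) (\<lambda>q. trunc_weight_X s f g q * ?k q) (xidx s) t"
  proof (rule model_cdf_reweight_le[OF T k cube_weight_const order_refl _ cond(1)])
    fix p p' assume p: "p \<in> space (cube {..xidx s})" "p' \<in> space (cube {..xidx s})"
      and "p (xidx s) \<le> t" "t < p' (xidx s)"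
    moreover have "p (xidx s) \<in> {0..1}" "p' (xidx s) \<in> {0..1}"
      using p by (auto simp: space_cube)
    ultimately show "1 * ?k p' \<le> ?k p * 1"
      using saw s y by (auto intro!: shift_kernel_antimono)
  qed (use cube_weight_integral_pos_of_mult[OF T k cond(1)] in auto)
  then show ?thesis unfolding cond(2) by simp
qed

lemma cond_cdf_Y_given_X_antimono:
  assumes saw: "\<forall>i\<in>{1..n}. saw_fun (f i) \<and> saw_fun (g i)" and cvx: "convex_fun (g s)"
    and s: "1 \<le> s" "s \<le> n" and x: "x1 \<in> {0..1}" "x2 \<in> {0..1}" "x1 \<le> x2"
    and pos: "0 < marg_dens (2 * n) (saw_weight n f g) (xidx (Suc s)) x1"
      "0 < marg_dens (2 * n) (saw_weight n f g) (xidx (Suc s)) x2"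
  shows "cond_cdf (2 * n) (saw_weight n f g) (yidx s) (xidx (Suc s)) t x2
    \<le> cond_cdf (2 * n) (saw_weight n f g) (yidx s) (xidx (Suc s)) t x1"
proof -
  let ?k = "\<lambda>x q. shift_kernel (g s) x (q (yidx s))"
  note cond1 = cond_cdf_Y_given_X[OF saw s x(1) pos(1)]
    and cond2 = cond_cdf_Y_given_X[OF saw s x(2) pos(2)]
  have "model_cdf (yidx s) (\<lambda>q. trunc_weight_Y s f g q * ?k x2 q) (yidx s) t
      \<le> model_cdf (yidx s) (\<lambda>q. trunc_weight_Y s f g q * ?k x1 q) (yidx s) t"
  proof (rule model_cdf_reweight_le[OF _ _ _ order_refl _ cond1(1) cond2(1)])
    fix p p' assume p: "p \<in> space (cube {..yidx s})" "p' \<in> space (cube {..yidx s})"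
      and "p (yidx s) \<le> t" "t < p' (yidx s)"
    moreover have "p (yidx s) \<in> {0..1}" "p' (yidx s) \<in> {0..1}"
      using p by (auto simp: space_cube)
    ultimately have "?k x1 p' * ?k x2 p \<le> ?k x1 p * ?k x2 p'"
      using saw s x by (intro shift_kernel_TP2 cvx) auto
    then show "?k x2 p * ?k x1 p' \<le> ?k x1 p * ?k x2 p'" by (simp add: mult.commute)
  qed (use saw s x in \<open>auto intro!: cube_weight_trunc_weight_Y cube_weight_shift_kernel
        unit_valued_coordinate unit_valued_const\<close>)
  then show ?thesis unfolding cond1(2) cond2(2) .
qed

lemma cond_cdf_Y_given_X_le_trunc_cdf:
  assumes saw: "\<forall>i\<in>{1..n}. saw_fun (f i) \<and> saw_fun (g i)"
    and s: "1 \<le> s" "s \<le> n" and x: "x \<in> {0..1}"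
    and pos: "0 < marg_dens (2 * n) (saw_weight n f g) (xidx (Suc s)) x"
  shows "cond_cdf (2 * n) (saw_weight n f g) (yidx s) (xidx (Suc s)) t x
    \<le> model_cdf (yidx s) (trunc_weight_Y s f g) (yidx s) t"
proof -
  let ?k = "\<lambda>q. shift_kernel (g s) x (q (yidx s))"
  note cond = cond_cdf_Y_given_X[OF saw s x pos]
  have T: "cube_weight {..yidx s} (trunc_weight_Y s f g)" and k: "cube_weight {..yidx s} ?k"
    using saw s x by (auto intro!: cube_weight_trunc_weight_Y cube_weight_shift_kernel
        unit_valued_coordinate unit_valued_const)
  have "model_cdf (yidx s) (\<lambda>q. trunc_weight_Y s f g q * ?k q) (yidx s) t
      \<le> model_cdf (yidx s) (\<lambda>q. trunc_weight_Y s f g q * 1) (yidx s) t"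
  proof (rule model_cdf_reweight_le[OF T cube_weight_const k order_refl _ _ cond(1)])
    fix p p' assume p: "p \<in> space (cube {..yidx s})" "p' \<in> space (cube {..yidx s})"
      and "p (yidx s) \<le> t" "t < p' (yidx s)"
    moreover have "p (yidx s) \<in> {0..1}" "p' (yidx s) \<in> {0..1}"
      using p by (auto simp: space_cube)
    ultimately show "?k p * 1 \<le> 1 * ?k p'"
      using saw s x by (auto intro!: shift_kernel_mono)
  qed (use cube_weight_integral_pos_of_mult[OF T k cond(1)] in auto)
  then show ?thesis unfolding cond(2) by simp
qed

theorem mainTheorem5:
  fixes n s :: nat and f g :: "nat \<Rightarrow> real \<Rightarrow> real" and t :: real
  assumes n: "1 \<le> n"
    and fg: "\<forall>i\<in>{1..n}. saw_fun (f i) \<and> saw_fun (g i)"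
    and cvx: "\<forall>i\<in>{1..n}. convex_fun (f i) \<and> convex_fun (g i)"
    and s: "1 \<le> s" "s \<le> n"
    and t: "t \<in> {0..1}"
  shows
    "(\<forall>y1\<in>{0..1}. \<forall>y2\<in>{0..1}. y1 \<le> y2 \<longrightarrow>
        marg_dens (2*n) (saw_weight n f g) (yidx s) y1 > 0 \<longrightarrow>
        marg_dens (2*n) (saw_weight n f g) (yidx s) y2 > 0 \<longrightarrow>
        cond_cdf (2*n) (saw_weight n f g) (xidx s) (yidx s) t y2
          \<le> cond_cdf (2*n) (saw_weight n f g) (xidx s) (yidx s) t y1)
   \<and> (\<forall>x1\<in>{0..1}. \<forall>x2\<in>{0..1}. x1 \<le> x2 \<longrightarrow>
        marg_dens (2*n) (saw_weight n f g) (xidx (Suc s)) x1 > 0 \<longrightarrow>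
        marg_dens (2*n) (saw_weight n f g) (xidx (Suc s)) x2 > 0 \<longrightarrow>
        cond_cdf (2*n) (saw_weight n f g) (yidx s) (xidx (Suc s)) t x2
          \<le> cond_cdf (2*n) (saw_weight n f g) (yidx s) (xidx (Suc s)) t x1)
   \<and> (\<forall>y\<in>{0..1}. marg_dens (2*n) (saw_weight n f g) (yidx s) y > 0 \<longrightarrow>
        cond_cdf (2*n) (saw_weight n f g) (xidx s) (yidx s) t y
          \<ge> model_cdf (xidx s) (trunc_weight_X s f g) (xidx s) t)
   \<and> (\<forall>x\<in>{0..1}. marg_dens (2*n) (saw_weight n f g) (xidx (Suc s)) x > 0 \<longrightarrow>
        cond_cdf (2*n) (saw_weight n f g) (yidx s) (xidx (Suc s)) t x
          \<le> model_cdf (yidx s) (trunc_weight_Y s f g) (yidx s) t)"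
proof -
  have "convex_fun (f s)" "convex_fun (g s)" using cvx s by auto
  then show ?thesis
    using cond_cdf_X_given_Y_antimono[OF fg _ s] cond_cdf_Y_given_X_antimono[OF fg _ s]
      trunc_cdf_le_cond_cdf_X_given_Y[OF fg s] cond_cdf_Y_given_X_le_trunc_cdf[OF fg s]
    by blast
qed

end
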